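(* Let $c>0$, $\alpha,\alpha'\in\mathcal{P}^2(\mathbb{T}^d\times U)$, $\eta\in\mathcal{P}^2(\mathbb{T}^d\times U\times\mathbb{B}_c)$ with $\mathrm{p}^{1,2}{}_\#\eta=\alpha$, $\tau,\theta>0$, and let $\pi\in\Pi^0(\alpha',\alpha)$ be an optimal plan between $\alpha'$ and $\alpha$. Then $$W_2(\Xi^\tau{}_\#\eta,\Xi^\theta{}_\#(\pi*\eta))\le W_2(\alpha,\alpha')+|\tau-\theta|\,c.$$
   Context: $\mathbb{T}^d=\mathbb{R}^d/\mathbb{Z}^d$ with distance $\|x-y\|=\inf\{\|x'-y'\|:x'\in x,y'\in y\}$; $\mathbb{B}_c$ is the ball of radius $c$ in $\mathbb{R}^d$ centered at $0$. $U$ is a compact space with metric $\hat\rho_U$, and $\mathbb{T}^d\times U$ carries the metric $[\|x-x'\|^2+\hat\rho_U(u,u')^2]^{1/2}$; $W_2$ is the 2-Wasserstein distance for this metric, and $\Pi^0(\alpha',\alpha)$ is the set of transport plans between $\alpha'$ and $\alpha$ attaining $W_2(\alpha',\alpha)^2$. $\Xi^\tau:\mathbb{T}^d\times U\times\mathbb{R}^d\to\mathbb{T}^d\times U$, $\Xi^\tau(x,u,w)=(x+\tau w,u)$. For $\pi$ a plan on $(\mathbb{T}^d\times U)\times(\mathbb{T}^d\times U)$ with marginals $\alpha',\alpha$ and $\eta$ with disintegration $\eta(dw|(x,u))$ along $\alpha$, the composition $\pi*\eta$ is the probability on $\mathbb{T}^d\times U\times\mathbb{R}^d$ defined by $\int\phi(x',u',w)(\pi*\eta)(d(x',u',w))=\int\int\phi(x',u',w)\eta(dw|(x,u))\pi(d((x',u'),(x,u)))$.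 $\mathrm{p}^{1,2}$ is projection on the first two components, $h_\#$ the push-forward. *)

theory Defs
  imports "HOL-Probability.Probability"
begin

text \<open>The torus T^d is represented by the fundamental domain [0,1)^d inside (real^'n);
  points of T^d x U are pairs (x,u) with x in [0,1)^d and u in U.\<close>

definition tor :: "(real^'n) set" where
  "tor = {x. \<forall>i. 0 \<le> x$i \<and> x$i < 1}"

definition tmod :: "(real^'n) \<Rightarrow> (real^'n)" where
  "tmod x = (\<chi> i. frac (x$i))"

definition tdist :: "(real^'n) \<Rightarrow> (real^'n) \<Rightarrow> real" where
  "tdist x y = (INF k\<in>{k::(real^'n). \<forall>i. k$i \<in> \<int>}. norm (x - y - k))"

definition pdist :: "((real^'n) \<times> 'u::metric_space) \<Rightarrow> ((real^'n) \<times> 'u) \<Rightarrow> real" where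
  "pdist p q = sqrt ((tdist (fst p) (fst q))^2 + (dist (snd p) (snd q))^2)"

text \<open>Probability measures on T^d x U (finite second moment is automatic by compactness).\<close>
definition P2 :: "'u::metric_space set \<Rightarrow> ((real^'n) \<times> 'u) measure \<Rightarrow> bool" where
  "P2 U \<mu> \<longleftrightarrow> prob_space \<mu> \<and> sets \<mu> = sets borel \<and> (AE z in \<mu>. z \<in> tor \<times> U)"

definition couplings :: "((real^'n) \<times> 'u::metric_space) measure \<Rightarrow> ((real^'n) \<times> 'u) measure
    \<Rightarrow> (((real^'n) \<times> 'u) \<times> ((real^'n) \<times> 'u)) measure set" where
  "couplings \<mu> \<nu> = {\<pi>. prob_space \<pi> \<and> sets \<pi> = sets borel \<and>
      distr \<pi> borel fst = \<mu> \<and> distr \<pi> borel snd = \<nu>}"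

definition W2cost :: "(((real^'n) \<times> 'u::metric_space) \<times> ((real^'n) \<times> 'u)) measure \<Rightarrow> ennreal" where
  "W2cost \<pi> = (\<integral>\<^sup>+ z. ennreal ((pdist (fst z) (snd z))^2) \<partial>\<pi>)"

definition W2 :: "((real^'n) \<times> 'u::metric_space) measure \<Rightarrow> ((real^'n) \<times> 'u) measure \<Rightarrow> real" where
  "W2 \<mu> \<nu> = sqrt (enn2real (INF \<pi>\<in>couplings \<mu> \<nu>. W2cost \<pi>))"

definition optimal_plans :: "((real^'n) \<times> 'u::metric_space) measure \<Rightarrow> ((real^'n) \<times> 'u) measure
    \<Rightarrow> (((real^'n) \<times> 'u) \<times> ((real^'n) \<times> 'u)) measure set" where
  "optimal_plans \<mu> \<nu> = {\<pi> \<in> couplings \<mu> \<nu>. W2cost \<pi> = (INF \<rho>\<in>couplings \<mu> \<nu>. W2cost \<rho>)}"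

definition Xi :: "real \<Rightarrow> (((real^'n) \<times> 'u) \<times> (real^'n)) \<Rightarrow> ((real^'n) \<times> 'u)" where
  "Xi \<tau> p = (tmod (fst (fst p) + \<tau> *\<^sub>R snd p), snd (fst p))"

text \<open>Composition pi * eta, where K z = eta(dw | z) is the disintegration of eta along alpha.\<close>
definition compose_plan :: "(((real^'n) \<times> 'u::metric_space) \<times> ((real^'n) \<times> 'u)) measure
    \<Rightarrow> (((real^'n) \<times> 'u) \<Rightarrow> (real^'n) measure) \<Rightarrow> (((real^'n) \<times> 'u) \<times> (real^'n)) measure" where
  "compose_plan \<pi> K = bind \<pi> (\<lambda>p. distr (K (snd p)) borel (\<lambda>w. (fst p, w)))"

end

theory Submission
  imports Defs
begin

text \<open>Glue the optimal plan \<pi> between \<alpha>' and \<alpha> with the velocity kernel K of \<eta>: the resulting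
  measure \<rho> on triples (((x',u'),(x,u)),w) has marginal \<eta> when (x',u') is forgotten and marginal
  \<pi>*\<eta> when (x,u) is forgotten. Pushing \<rho> forward by
  (((x',u'),(x,u)),w) \<mapsto> (\<Xi>^\<tau>(x,u,w), \<Xi>^\<theta>(x',u',w)) couples the two measures of the claim, and the
  transported distance is at most d((x,u),(x',u')) + |\<tau>-\<theta>| |w| \<le> d((x,u),(x',u')) + |\<tau>-\<theta>| c.
  Minkowski's inequality in L^2(\<rho>) turns this into the bound on the cost, since the L^2 norm of
  d((x,u),(x',u')) is W_2(\<alpha>,\<alpha>') by optimality of \<pi>.\<close>

section \<open>Borel sets of products with a second countable factor\<close>

lemma sets_borel_prod_second_countable:
  "sets (borel :: ('a::second_countable_topology \<times> 'b::topological_space) measure) = sets (borel \<Otimes>\<^sub>M borel)"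
proof
  show "sets (borel \<Otimes>\<^sub>M borel) \<subseteq> sets (borel :: ('a \<times> 'b) measure)"
  proof -
    have "(\<lambda>x. (fst x, snd x)) \<in> (borel :: ('a \<times> 'b) measure) \<rightarrow>\<^sub>M (borel \<Otimes>\<^sub>M borel)"
      by (intro measurable_Pair borel_measurable_continuous_onI continuous_intros)
    then show ?thesis
      by (auto dest!: measurable_sets simp: space_pair_measure)
  qed
next
  obtain B :: "'a set set" where B: "countable B" "topological_basis B"
    using ex_countable_basis by blast
  have "S \<in> sets (borel \<Otimes>\<^sub>M borel)" if S: "open S" for S :: "('a \<times> 'b) set"
  proof -
    define V where "V b = \<Union>{V. open V \<and> b \<times> V \<subseteq> S}" for b
    have S_eq: "S = (\<Union>b\<in>B. b \<times> V b)"
    proof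
      show "S \<subseteq> (\<Union>b\<in>B. b \<times> V b)"
      proof
        fix z assume "z \<in> S"
        then obtain A W where AW: "open A" "open W" "fst z \<in> A" "snd z \<in> W" "A \<times> W \<subseteq> S"
          using S by (metis open_prod_elim mem_Sigma_iff prod.collapse)
        then obtain b where b: "b \<in> B" "fst z \<in> b" "b \<subseteq> A"
          using topological_basisE[OF B(2) AW(1) AW(3)] by blast
        then have "snd z \<in> V b" using AW unfolding V_def by blast
        then show "z \<in> (\<Union>b\<in>B. b \<times> V b)" using b by (cases z) auto
      qed
      show "(\<Union>b\<in>B. b \<times> V b) \<subseteq> S" unfolding V_def by blast
    qed
    have "(\<Union>b\<in>B. b \<times> V b) \<in> sets (borel \<Otimes>\<^sub>M borel)"
    proof (rule sets.countable_UN'')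
      fix b assume "b \<in> B"
      then have "open b" using B(2) topological_basis_open by blast
      moreover have "open (V b)" unfolding V_def by auto
      ultimately show "b \<times> V b \<in> sets (borel \<Otimes>\<^sub>M borel)"
        by (intro pair_measureI) auto
    qed (rule B(1))
    then show ?thesis using S_eq by simp
  qed
  then show "sets (borel :: ('a \<times> 'b) measure) \<subseteq> sets (borel \<Otimes>\<^sub>M borel)"
    unfolding sets_borel
    by (intro sets.sigma_sets_subset') (auto simp: space_pair_measure)
qed

lemma measurable_Pair_second_countable1:
  fixes f :: "'c \<Rightarrow> 'a::second_countable_topology" and g :: "'c \<Rightarrow> 'b::topological_space"
  assumes "f \<in> M \<rightarrow>\<^sub>M borel" "g \<in> M \<rightarrow>\<^sub>M borel"
  shows "(\<lambda>x. (f x, g x)) \<in> M \<rightarrow>\<^sub>M borel"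
  using measurable_Pair[OF assms] measurable_cong_sets[OF refl sets_borel_prod_second_countable]
  by blast

lemma measurable_Pair_second_countable2:
  fixes f :: "'c \<Rightarrow> 'a::topological_space" and g :: "'c \<Rightarrow> 'b::second_countable_topology"
  assumes "f \<in> M \<rightarrow>\<^sub>M borel" "g \<in> M \<rightarrow>\<^sub>M borel"
  shows "(\<lambda>x. (f x, g x)) \<in> M \<rightarrow>\<^sub>M borel"
proof -
  have "(\<lambda>z::'b \<times> 'a. (snd z, fst z)) \<in> borel \<rightarrow>\<^sub>M borel"
    by (intro borel_measurable_continuous_onI continuous_intros)
  from measurable_compose[OF measurable_Pair_second_countable1[OF assms(2,1)] this]
  show ?thesis by simp
qed

lemma measurable_Pair_Pair_second_countable:
  fixes f g :: "'c \<Rightarrow> 'a::second_countable_topology" and f' g' :: "'c \<Rightarrow> 'b::topological_space"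
  assumes "f \<in> M \<rightarrow>\<^sub>M borel" "g \<in> M \<rightarrow>\<^sub>M borel" "(\<lambda>x. (f' x, g' x)) \<in> M \<rightarrow>\<^sub>M borel"
  shows "(\<lambda>x. ((f x, f' x), (g x, g' x))) \<in> M \<rightarrow>\<^sub>M borel"
proof -
  note pairs = measurable_Pair_second_countable1[OF measurable_Pair_second_countable1[OF assms(1,2)] assms(3)]
  have "(\<lambda>z::('a \<times> 'a) \<times> ('b \<times> 'b). ((fst (fst z), fst (snd z)), (snd (fst z), snd (snd z))))
      \<in> borel \<rightarrow>\<^sub>M borel"
    by (intro borel_measurable_continuous_onI continuous_intros)
  from measurable_compose[OF pairs this] show ?thesis by simp
qed

lemma measurable_Pair_const_borel:
  assumes "sets M = sets (borel :: 'b::second_countable_topology measure)"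
  shows "(\<lambda>w. (p :: 'a::topological_space, w)) \<in> M \<rightarrow>\<^sub>M borel"
  by (subst measurable_cong_sets[OF assms refl])
     (auto intro!: borel_measurable_continuous_onI continuous_intros)

section \<open>The distance on the torus\<close>

definition torus_norm :: "real^'n \<Rightarrow> real" where
  "torus_norm v = (INF k\<in>{k::real^'n. \<forall>i. k$i \<in> \<int>}. norm (v - k))"

lemma tdist_eq_torus_norm: "tdist x y = torus_norm (x - y)"
  unfolding tdist_def torus_norm_def by simp

lemma integer_vectors_nonempty: "{k::real^'n. \<forall>i. k$i \<in> \<int>} \<noteq> {}"
  by (auto intro!: exI[of _ 0])

lemma torus_norm_nonneg: "0 \<le> torus_norm v"
  unfolding torus_norm_def by (rule cINF_greatest[OF integer_vectors_nonempty]) auto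

lemma torus_norm_le: "\<forall>i. k$i \<in> \<int> \<Longrightarrow> torus_norm v \<le> norm (v - k)"
  unfolding torus_norm_def by (rule cINF_lower[OF bdd_belowI[of _ 0]]) auto

lemma torus_norm_le_shift:
  fixes k v v' :: "real^'n"
  assumes k: "\<forall>i. k$i \<in> \<int>"
  shows "torus_norm v \<le> torus_norm v' + norm (v - v' - k)"
proof -
  have "torus_norm v - norm (v - v' - k) \<le> torus_norm v'"
    unfolding torus_norm_def[of v']
  proof (rule cINF_greatest[OF integer_vectors_nonempty])
    fix k' :: "real^'n" assume "k' \<in> {k. \<forall>i. k$i \<in> \<int>}"
    then have "torus_norm v \<le> norm (v - (k + k'))" using k by (intro torus_norm_le) auto
    also have "\<dots> \<le> norm (v' - k') + norm (v - v' - k)"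
      using norm_triangle_ineq[of "v' - k'" "v - v' - k"] by (simp add: algebra_simps)
    finally show "torus_norm v - norm (v - v' - k) \<le> norm (v' - k')" by simp
  qed
  then show ?thesis by simp
qed

lemma torus_norm_minus: "torus_norm (- v) = torus_norm v"
proof -
  have *: "torus_norm (- w) \<le> torus_norm w" for w :: "real^'n"
    unfolding torus_norm_def[of w]
  proof (rule cINF_greatest[OF integer_vectors_nonempty])
    fix k :: "real^'n" assume "k \<in> {k. \<forall>i. k$i \<in> \<int>}"
    then have "torus_norm (- w) \<le> norm (- w - (- k))" by (intro torus_norm_le) auto
    then show "torus_norm (- w) \<le> norm (w - k)" by (simp add: norm_minus_commute)
  qed
  show ?thesis using *[of v] *[of "- v"] by simp
qed

lemma tdist_commute: "tdist x y = tdist y x"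
  unfolding tdist_eq_torus_norm by (metis minus_diff_eq torus_norm_minus)

lemma continuous_on_torus_norm: "continuous_on UNIV torus_norm"
proof -
  have "dist (torus_norm v) (torus_norm v') \<le> 1 * dist v v'" for v v' :: "real^'n"
    using torus_norm_le_shift[of 0 v v'] torus_norm_le_shift[of 0 v' v]
    by (simp add: dist_real_def dist_norm norm_minus_commute)
  then have "lipschitz_on 1 UNIV torus_norm" by (intro lipschitz_onI) auto
  then show ?thesis by (rule lipschitz_on_continuous_on)
qed

lemma torus_norm_tmod_diff_le:
  fixes x x' w :: "real^'n"
  shows "torus_norm (tmod (x + a *\<^sub>R w) - tmod (x' + b *\<^sub>R w)) \<le> torus_norm (x - x') + \<bar>a - b\<bar> * norm w"
proof -
  define m :: "real^'n"
    where "m = (\<chi> i. of_int \<lfloor>(x' + b *\<^sub>R w)$i\<rfloor> - of_int \<lfloor>(x + a *\<^sub>R w)$i\<rfloor>)"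
  have "tmod (x + a *\<^sub>R w) - tmod (x' + b *\<^sub>R w) - (x - x') - m = (a - b) *\<^sub>R w"
    unfolding tmod_def m_def by (simp add: vec_eq_iff frac_def algebra_simps)
  moreover have "\<forall>i. m$i \<in> \<int>" unfolding m_def by auto
  ultimately show ?thesis
    using torus_norm_le_shift[of m "tmod (x + a *\<^sub>R w) - tmod (x' + b *\<^sub>R w)" "x - x'"] by simp
qed

section \<open>The distance on T^d \<times> U and the maps \<Xi>\<close>

type_synonym ('n, 'u) point = "(real^'n) \<times> 'u"

lemma sqrt_sum_squares_le_add:
  fixes s t d e :: real
  assumes "0 \<le> s" "s \<le> t + e" "0 \<le> e"
  shows "sqrt (s^2 + d^2) \<le> sqrt (t^2 + d^2) + e"
proof -
  have "s^2 \<le> (t + e)^2" using assms by (intro power_mono) auto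
  then have "sqrt (s^2 + d^2) \<le> sqrt ((t + e)^2 + d^2)" by simp
  also have "\<dots> \<le> sqrt (t^2 + d^2) + e"
  proof (rule real_le_lsqrt)
    have "t \<le> sqrt (t^2 + d^2)" by (simp add: real_le_rsqrt)
    then have "(t + e)^2 + d^2 \<le> t^2 + d^2 + 2 * e * sqrt (t^2 + d^2) + e^2"
      using assms by (simp add: power2_eq_square algebra_simps mult_left_mono)
    also have "\<dots> = (sqrt (t^2 + d^2) + e)^2"
      by (simp add: power2_eq_square algebra_simps)
    finally show "(t + e)^2 + d^2 \<le> (sqrt (t^2 + d^2) + e)^2" .
  qed (use assms in simp)
  finally show ?thesis .
qed

lemma pdist_nonneg: "0 \<le> pdist p q"
  unfolding pdist_def by simp

lemma pdist_commute: "pdist p q = pdist q p"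
  unfolding pdist_def by (simp add: tdist_commute dist_commute)

lemma continuous_on_pdist:
  "continuous_on UNIV (\<lambda>z::('n::finite, 'u::metric_space) point \<times> ('n, 'u) point. pdist (fst z) (snd z))"
  unfolding pdist_def tdist_eq_torus_norm
  by (intro continuous_intros continuous_on_compose2[OF continuous_on_torus_norm]) auto

lemma borel_measurable_pdist_square:
  "(\<lambda>z::('n::finite, 'u::metric_space) point \<times> ('n, 'u) point. ennreal ((pdist (fst z) (snd z))^2))
     \<in> borel_measurable borel"
  using borel_measurable_continuous_onI[OF continuous_on_pdist] by measurable

lemma pdist_Xi_le:
  "pdist (Xi a (p, w)) (Xi b (p', w)) \<le> pdist p p' + \<bar>a - b\<bar> * norm w"
  unfolding pdist_def Xi_def tdist_eq_torus_norm
  by (auto intro!: sqrt_sum_squares_le_add torus_norm_tmod_diff_le torus_norm_nonneg)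

lemma borel_measurable_tmod: "tmod \<in> borel_measurable (borel :: (real^'n) measure)"
proof (subst borel_measurable_euclidean_space, intro ballI)
  fix b :: "real^'n" assume "b \<in> Basis"
  then obtain i where b: "b = axis i 1" by (auto simp: Basis_vec_def)
  have "(\<lambda>x. tmod x \<bullet> b) = (\<lambda>x. x$i - of_int \<lfloor>x$i\<rfloor>)"
    by (auto simp: b tmod_def inner_axis frac_def)
  moreover have "(\<lambda>x::real^'n. x$i) \<in> borel_measurable borel"
    by (intro borel_measurable_continuous_onI continuous_intros)
  ultimately show "(\<lambda>x. tmod x \<bullet> b) \<in> borel_measurable borel"
    using borel_measurable_real_floor by simp
qed

lemma measurable_tmod_add_scaleR:
  fixes f g :: "'a \<Rightarrow> real^'n"
  assumes "f \<in> M \<rightarrow>\<^sub>M borel" "g \<in> M \<rightarrow>\<^sub>M borel"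
  shows "(\<lambda>x. tmod (f x + a *\<^sub>R g x)) \<in> M \<rightarrow>\<^sub>M borel"
proof -
  have "(\<lambda>x. f x + a *\<^sub>R g x) \<in> M \<rightarrow>\<^sub>M borel" using assms by measurable
  from measurable_compose[OF this borel_measurable_tmod] show ?thesis .
qed

lemma measurable_Xi: "Xi a \<in> (borel :: (('n::finite, 'u::topological_space) point \<times> (real^'n)) measure) \<rightarrow>\<^sub>M borel"
  unfolding Xi_def
  by (intro measurable_Pair_second_countable1 measurable_tmod_add_scaleR
      borel_measurable_continuous_onI continuous_intros)

definition Xi_pair :: "real \<Rightarrow> real \<Rightarrow> ((('n, 'u) point \<times> ('n, 'u) point) \<times> (real^'n))
    \<Rightarrow> ('n, 'u) point \<times> ('n, 'u) point" where
  "Xi_pair a b q = (Xi a (snd (fst q), snd q), Xi b (fst (fst q), snd q))"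

lemma measurable_Xi_pair:
  "Xi_pair a b \<in> (borel :: ((('n::finite, 'u::topological_space) point \<times> ('n, 'u) point) \<times> (real^'n)) measure)
     \<rightarrow>\<^sub>M borel"
  unfolding Xi_pair_def Xi_def
  by (rule measurable_Pair_Pair_second_countable; simp;
      intro measurable_tmod_add_scaleR borel_measurable_continuous_onI continuous_intros)

section \<open>Gluing a plan with a kernel\<close>

lemma measurable_distr_Pair_kernel:
  fixes K :: "'a::topological_space \<Rightarrow> 'c::second_countable_topology measure"
  assumes K: "K \<in> borel \<rightarrow>\<^sub>M subprob_algebra borel"
    and g: "g \<in> (borel :: 'b::topological_space measure) \<rightarrow>\<^sub>M borel"
  shows "(\<lambda>p. distr (K (g p)) borel (\<lambda>w. (p, w))) \<in> (borel :: 'b measure) \<rightarrow>\<^sub>M subprob_algebra borel"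
proof (rule measurable_distr2[where f = "\<lambda>p w. (p, w)" and L = borel and M = borel])
  show "(\<lambda>p. K (g p)) \<in> borel \<rightarrow>\<^sub>M subprob_algebra borel" using measurable_compose[OF g K] .
  show "(\<lambda>(p, w). (p, w)) \<in> (borel :: 'b measure) \<Otimes>\<^sub>M (borel :: 'c measure) \<rightarrow>\<^sub>M borel"
    using measurable_Pair_second_countable2[OF measurable_fst measurable_snd] by (simp add: id_def)
qed

definition glue_plan :: "('a::topological_space \<times> 'b::topological_space) measure
    \<Rightarrow> ('b \<Rightarrow> 'c::topological_space measure) \<Rightarrow> (('a \<times> 'b) \<times> 'c) measure" where
  "glue_plan \<pi> K = \<pi> \<bind> (\<lambda>p. distr (K (snd p)) borel (\<lambda>w. (p, w)))"

context
  fixes \<pi> :: "('a::topological_space \<times> 'b::topological_space) measure"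
    and K :: "'b \<Rightarrow> 'c::second_countable_topology measure"
  assumes \<pi>: "prob_space \<pi>" "sets \<pi> = sets borel"
    and K: "K \<in> borel \<rightarrow>\<^sub>M subprob_algebra borel" "\<And>z. prob_space (K z)"
begin

private lemma sets_K: "sets (K z) = sets borel"
  using sets_kernel[OF K(1)] by simp

private lemma measurable_glue_kernel:
  "(\<lambda>p. distr (K (snd p)) borel (\<lambda>w. (p, w))) \<in> \<pi> \<rightarrow>\<^sub>M subprob_algebra borel"
  unfolding measurable_cong_sets[OF \<pi>(2) refl]
  by (rule measurable_distr_Pair_kernel[OF K(1)])
     (auto intro!: borel_measurable_continuous_onI continuous_intros)

private lemma space_\<pi>_nonempty: "space \<pi> \<noteq> {}"
  using prob_space.not_empty[OF \<pi>(1)] .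

lemma sets_glue_plan: "sets (glue_plan \<pi> K) = sets borel"
  unfolding glue_plan_def by (rule sets_bind[OF _ space_\<pi>_nonempty]) simp

lemma prob_space_glue_plan: "prob_space (glue_plan \<pi> K)"
  unfolding glue_plan_def
  using prob_space.prob_space_distr[OF K(2) measurable_Pair_const_borel[OF sets_K]]
  by (intro prob_space.prob_space_bind[OF \<pi>(1) _ measurable_glue_kernel]) auto

lemma distr_glue_plan_marginal:
  assumes h: "h \<in> borel \<rightarrow>\<^sub>M borel"
  shows "distr (glue_plan \<pi> K) borel h = \<pi> \<bind> (\<lambda>p. distr (K (snd p)) borel (\<lambda>w. h (p, w)))"
  unfolding glue_plan_def distr_bind[OF measurable_glue_kernel space_\<pi>_nonempty h]
  by (rule bind_cong[OF refl])
     (simp add: distr_distr[OF h measurable_Pair_const_borel[OF sets_K]] comp_def)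

lemma distr_glue_plan_fst: "distr (glue_plan \<pi> K) borel fst = \<pi>"
proof -
  have fst: "fst \<in> (borel :: (('a \<times> 'b) \<times> 'c) measure) \<rightarrow>\<^sub>M borel"
    by (intro borel_measurable_continuous_onI continuous_intros)
  have "distr (glue_plan \<pi> K) borel fst = \<pi> \<bind> return borel"
    unfolding distr_glue_plan_marginal[OF fst]
    by (intro bind_cong[OF refl]) (simp add: prob_space.distr_const[OF K(2)])
  also have "\<dots> = \<pi>" by (rule bind_return''[OF \<pi>(2)])
  finally show ?thesis .
qed

lemma distr_glue_plan_forget_fst:
  "distr (glue_plan \<pi> K) borel (\<lambda>q. (snd (fst q), snd q))
     = distr \<pi> borel snd \<bind> (\<lambda>z. distr (K z) borel (\<lambda>w. (z, w)))"
proof -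
  have snd_\<pi>: "snd \<in> \<pi> \<rightarrow>\<^sub>M borel"
    unfolding measurable_cong_sets[OF \<pi>(2) refl]
    by (intro borel_measurable_continuous_onI continuous_intros)
  have forget: "(\<lambda>q. (snd (fst q), snd q)) \<in> (borel :: (('a \<times> 'b) \<times> 'c) measure) \<rightarrow>\<^sub>M borel"
    by (intro borel_measurable_continuous_onI continuous_intros)
  have "distr (glue_plan \<pi> K) borel (\<lambda>q. (snd (fst q), snd q))
      = \<pi> \<bind> (\<lambda>p. distr (K (snd p)) borel (\<lambda>w. (snd p, w)))"
    unfolding distr_glue_plan_marginal[OF forget] by simp
  also have "\<dots> = distr \<pi> borel snd \<bind> (\<lambda>z. distr (K z) borel (\<lambda>w. (z, w)))"
    by (rule bind_distr[symmetric, OF snd_\<pi> measurable_distr_Pair_kernel[OF K(1) measurable_ident_sets]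
        space_\<pi>_nonempty]) simp
  finally show ?thesis .
qed

end

lemma distr_glue_plan_forget_snd:
  assumes "prob_space \<pi>" "sets \<pi> = sets borel"
    and "K \<in> borel \<rightarrow>\<^sub>M subprob_algebra borel" "\<And>z. prob_space (K z)"
  shows "distr (glue_plan \<pi> K) borel (\<lambda>q. (fst (fst q), snd q)) = compose_plan \<pi> K"
proof -
  have forget: "(\<lambda>q. (fst (fst q), snd q))
      \<in> (borel :: ((('n::finite, 'u::metric_space) point \<times> ('n, 'u) point) \<times> (real^'n)) measure) \<rightarrow>\<^sub>M borel"
    by (intro borel_measurable_continuous_onI continuous_intros)
  show ?thesis
    unfolding compose_plan_def distr_glue_plan_marginal[OF assms forget] by simp
qed

section \<open>Transport costs\<close>

lemma swap_coupling:
  fixes \<sigma> :: "(('n::finite, 'u::metric_space) point \<times> ('n, 'u) point) measure"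
  assumes "\<sigma> \<in> couplings \<mu> \<nu>"
  shows "distr \<sigma> borel prod.swap \<in> couplings \<nu> \<mu>"
    and "W2cost (distr \<sigma> borel prod.swap) = W2cost \<sigma>"
proof -
  have \<sigma>: "prob_space \<sigma>" "sets \<sigma> = sets borel" "distr \<sigma> borel fst = \<mu>" "distr \<sigma> borel snd = \<nu>"
    using assms by (auto simp: couplings_def)
  have swap: "prod.swap \<in> \<sigma> \<rightarrow>\<^sub>M borel"
    unfolding measurable_cong_sets[OF \<sigma>(2) refl] prod.swap_def
    by (intro borel_measurable_continuous_onI continuous_intros)
  have fst_snd: "fst \<in> (borel :: (('n, 'u) point \<times> ('n, 'u) point) measure) \<rightarrow>\<^sub>M borel"
    "snd \<in> (borel :: (('n, 'u) point \<times> ('n, 'u) point) measure) \<rightarrow>\<^sub>M borel"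
    by (auto intro!: borel_measurable_continuous_onI continuous_intros)
  show "distr \<sigma> borel prod.swap \<in> couplings \<nu> \<mu>"
    unfolding couplings_def
    using \<sigma> prob_space.prob_space_distr[OF \<sigma>(1) swap]
    by (simp add: distr_distr[OF fst_snd(1) swap] distr_distr[OF fst_snd(2) swap] comp_def)
  show "W2cost (distr \<sigma> borel prod.swap) = W2cost \<sigma>"
    unfolding W2cost_def
    by (subst nn_integral_distr[OF swap]) (simp_all add: borel_measurable_pdist_square pdist_commute)
qed

lemma W2_commute: "W2 \<mu> \<nu> = W2 \<nu> \<mu>"
proof -
  have "(INF \<sigma>\<in>couplings \<mu> \<nu>. W2cost \<sigma>) \<le> (INF \<sigma>\<in>couplings \<nu> \<mu>. W2cost \<sigma>)"
    for \<mu> \<nu> :: "('n::finite, 'u::metric_space) point measure"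
  proof (rule INF_greatest)
    fix \<sigma> assume "\<sigma> \<in> couplings \<nu> \<mu>"
    from INF_lower[OF swap_coupling(1)[OF this], of W2cost] swap_coupling(2)[OF this]
    show "(INF \<sigma>\<in>couplings \<mu> \<nu>. W2cost \<sigma>) \<le> W2cost \<sigma>" by simp
  qed
  then show ?thesis unfolding W2_def by (metis antisym)
qed

lemma W2cost_optimal_plan:
  assumes "\<pi> \<in> optimal_plans \<mu> \<nu>" "W2cost \<pi> < \<top>"
  shows "W2cost \<pi> = ennreal ((W2 \<mu> \<nu>)^2)"
  using assms unfolding W2_def optimal_plans_def by auto

lemma W2_le_of_coupling:
  assumes "\<gamma> \<in> couplings \<mu> \<nu>" "W2cost \<gamma> \<le> ennreal (r^2)" "0 \<le> r"
  shows "W2 \<mu> \<nu> \<le> r"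
proof -
  have "(INF \<sigma>\<in>couplings \<mu> \<nu>. W2cost \<sigma>) \<le> ennreal (r^2)"
    using INF_lower[OF assms(1)] assms(2) by (rule order_trans)
  then have "enn2real (INF \<sigma>\<in>couplings \<mu> \<nu>. W2cost \<sigma>) \<le> r^2"
    by (intro enn2real_leI) simp
  from real_sqrt_le_mono[OF this] show ?thesis unfolding W2_def using assms(3) by simp
qed

lemma AE_coupling_in_Times:
  fixes \<sigma> :: "(('n::finite, 'u::metric_space) point \<times> ('n, 'u) point) measure"
  assumes \<sigma>: "\<sigma> \<in> couplings \<mu> \<nu>" and "AE z in \<mu>. z \<in> A" "AE z in \<nu>. z \<in> B"
    and "A \<in> sets borel" "B \<in> sets borel"
  shows "AE z in \<sigma>. z \<in> A \<times> B"
proof -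
  have AE_marginal: "AE z in \<sigma>. f z \<in> C"
    if "f \<in> (borel :: (('n, 'u) point \<times> ('n, 'u) point) measure) \<rightarrow>\<^sub>M borel"
      "AE z in distr \<sigma> borel f. z \<in> C" "C \<in> sets borel" for f C
  proof -
    have f: "f \<in> \<sigma> \<rightarrow>\<^sub>M borel"
      using \<sigma> that(1) measurable_cong_sets[of \<sigma> borel] by (auto simp: couplings_def)
    have C: "{z \<in> space borel. z \<in> C} \<in> sets borel" using that(3) by simp
    from that(2) show ?thesis unfolding AE_distr_iff[OF f C] .
  qed
  have fst_snd: "fst \<in> (borel :: (('n, 'u) point \<times> ('n, 'u) point) measure) \<rightarrow>\<^sub>M borel"
    "snd \<in> (borel :: (('n, 'u) point \<times> ('n, 'u) point) measure) \<rightarrow>\<^sub>M borel"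
    by (auto intro!: borel_measurable_continuous_onI continuous_intros)
  from \<sigma> have marginals: "distr \<sigma> borel fst = \<mu>" "distr \<sigma> borel snd = \<nu>" by (auto simp: couplings_def)
  have "AE z in \<sigma>. fst z \<in> A"
    using assms(2) unfolding marginals(1)[symmetric] by (rule AE_marginal[OF fst_snd(1) _ assms(4)])
  moreover have "AE z in \<sigma>. snd z \<in> B"
    using assms(3) unfolding marginals(2)[symmetric] by (rule AE_marginal[OF fst_snd(2) _ assms(5)])
  ultimately show ?thesis by eventually_elim (simp add: mem_Times_iff)
qed

lemma W2cost_finite:
  fixes \<pi> :: "(('n::finite, 'u::metric_space) point \<times> ('n, 'u) point) measure"
  assumes "compact U" "P2 U \<mu>" "P2 U \<nu>" "\<pi> \<in> couplings \<mu> \<nu>"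
  shows "W2cost \<pi> < \<top>"
proof -
  define S where "S = cbox (0::real^'n) 1 \<times> U"
  have "compact S" unfolding S_def by (intro compact_Times compact_cbox assms(1))
  have "AE z in \<kappa>. z \<in> S" if "P2 U \<kappa>" for \<kappa>
    using that unfolding P2_def S_def tor_def by (auto elim!: eventually_mono simp: mem_box_cart less_imp_le)
  with assms(2-4) \<open>compact S\<close> have AE_SS: "AE z in \<pi>. z \<in> S \<times> S"
    by (intro AE_coupling_in_Times) (auto simp: borel_compact)
  have "compact ((\<lambda>z. pdist (fst z) (snd z)) ` (S \<times> S))"
    using \<open>compact S\<close>
    by (intro compact_continuous_image continuous_on_subset[OF continuous_on_pdist] compact_Times) auto
  then obtain M where M: "\<And>z. z \<in> S \<times> S \<Longrightarrow> pdist (fst z) (snd z) \<le> M"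
    by (meson bdd_above.E bounded_imp_bdd_above compact_imp_bounded image_eqI)
  have "AE z in \<pi>. ennreal ((pdist (fst z) (snd z))^2) \<le> ennreal (M^2)"
    using AE_SS by eventually_elim (auto intro!: ennreal_leI power_mono pdist_nonneg M)
  then have "W2cost \<pi> \<le> (\<integral>\<^sup>+z. ennreal (M^2) \<partial>\<pi>)"
    unfolding W2cost_def by (rule nn_integral_mono_AE)
  also have "\<dots> = ennreal (M^2)"
    using assms(4) by (simp add: couplings_def prob_space.emeasure_space_1)
  finally show ?thesis by (simp add: le_less_trans)
qed

lemma nn_integral_square_add_const_le:
  fixes a :: "'a \<Rightarrow> real"
  assumes M: "prob_space M" and a: "a \<in> borel_measurable M"
    and I: "(\<integral>\<^sup>+x. ennreal ((a x)^2) \<partial>M) = ennreal (W^2)" and "0 \<le> W" "0 \<le> b"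
  shows "(\<integral>\<^sup>+x. ennreal ((a x + b)^2) \<partial>M) \<le> ennreal ((W + b)^2)"
proof (cases "W = 0")
  case True
  have "AE x in M. ennreal ((a x)^2) = 0"
    using I True a by (subst nn_integral_0_iff_AE[symmetric]) auto
  then have "AE x in M. ennreal ((a x + b)^2) = ennreal (b^2)"
    by (rule eventually_mono) (simp add: ennreal_eq_0_iff)
  then have "(\<integral>\<^sup>+x. ennreal ((a x + b)^2) \<partial>M) = (\<integral>\<^sup>+x. ennreal (b^2) \<partial>M)"
    by (rule nn_integral_cong_AE)
  also have "\<dots> = ennreal (b^2)"
    using prob_space.emeasure_space_1[OF M] by simp
  finally show ?thesis using True by simp
next
  case False
  with \<open>0 \<le> W\<close> have "0 < W" by simp
  have pointwise: "(a x + b)^2 \<le> (1 + b / W) * (a x)^2 + (b^2 + b * W)" for x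
  proof -
    have "2 * a x * W \<le> (a x)^2 + W^2"
      using sum_squares_bound[of "a x" W] by (simp add: power2_eq_square)
    then have "b * (2 * a x) \<le> b * ((a x)^2 / W + W)"
      using \<open>0 < W\<close> \<open>0 \<le> b\<close> by (intro mult_left_mono) (simp_all add: field_simps power2_eq_square)
    then show ?thesis
      using \<open>0 < W\<close> by (simp add: field_simps power2_eq_square)
  qed
  have "(\<integral>\<^sup>+x. ennreal ((a x + b)^2) \<partial>M) \<le>
        (\<integral>\<^sup>+x. ennreal (1 + b / W) * ennreal ((a x)^2) + ennreal (b^2 + b * W) \<partial>M)"
    using pointwise \<open>0 < W\<close> \<open>0 \<le> b\<close>
    by (intro nn_integral_mono)
       (simp add: ennreal_mult[symmetric] ennreal_plus[symmetric] del: ennreal_plus)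
  also have "\<dots> = ennreal (1 + b / W) * (\<integral>\<^sup>+x. ennreal ((a x)^2) \<partial>M) + (\<integral>\<^sup>+x. ennreal (b^2 + b * W) \<partial>M)"
    using a by (subst nn_integral_add) (auto simp: nn_integral_cmult)
  also have "\<dots> = ennreal (1 + b / W) * ennreal (W^2) + ennreal (b^2 + b * W)"
    using prob_space.emeasure_space_1[OF M] I by simp
  also have "\<dots> = ennreal ((1 + b / W) * W^2 + (b^2 + b * W))"
    using \<open>0 < W\<close> \<open>0 \<le> b\<close> by (simp add: ennreal_mult[symmetric] ennreal_plus[symmetric] del: ennreal_plus)
  also have "(1 + b / W) * W^2 + (b^2 + b * W) = (W + b)^2"
    using \<open>0 < W\<close> by (simp add: field_simps power2_eq_square)
  finally show ?thesis .
qed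

section \<open>The glued coupling of the two pushed-forward measures\<close>

context
  fixes \<pi> :: "(('n::finite, 'u::metric_space) point \<times> ('n, 'u) point) measure"
    and K :: "('n, 'u) point \<Rightarrow> (real^'n) measure"
    and \<alpha> \<alpha>' :: "('n, 'u) point measure"
    and \<eta> :: "(('n, 'u) point \<times> (real^'n)) measure"
  assumes \<pi>: "\<pi> \<in> couplings \<alpha>' \<alpha>"
    and K: "K \<in> borel \<rightarrow>\<^sub>M subprob_algebra borel" "\<And>z. prob_space (K z)"
    and \<eta>: "\<eta> = \<alpha> \<bind> (\<lambda>z. distr (K z) borel (\<lambda>w. (z, w)))"
begin

private lemma \<pi>_facts: "prob_space \<pi>" "sets \<pi> = sets borel" "distr \<pi> borel fst = \<alpha>'" "distr \<pi> borel snd = \<alpha>"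
  using \<pi> by (auto simp: couplings_def)

private lemmas glue = sets_glue_plan[OF \<pi>_facts(1,2) K] prob_space_glue_plan[OF \<pi>_facts(1,2) K]

private lemma measurable_glue_plan: "f \<in> borel \<rightarrow>\<^sub>M N \<Longrightarrow> f \<in> glue_plan \<pi> K \<rightarrow>\<^sub>M N"
  using measurable_cong_sets[OF glue(1) refl] by blast

private lemma distr_glue_plan_forget_fst_eq: "distr (glue_plan \<pi> K) borel (\<lambda>q. (snd (fst q), snd q)) = \<eta>"
  using distr_glue_plan_forget_fst[OF \<pi>_facts(1,2) K] \<pi>_facts(4) \<eta> by simp

lemma coupling_Xi_pair_glue_plan:
  "distr (glue_plan \<pi> K) borel (Xi_pair \<tau> \<theta>)
     \<in> couplings (distr \<eta> borel (Xi \<tau>)) (distr (compose_plan \<pi> K) borel (Xi \<theta>))"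
proof -
  have forget: "(\<lambda>q. (snd (fst q), snd q)) \<in> glue_plan \<pi> K \<rightarrow>\<^sub>M borel"
    "(\<lambda>q. (fst (fst q), snd q)) \<in> glue_plan \<pi> K \<rightarrow>\<^sub>M borel"
    by (auto intro!: measurable_glue_plan borel_measurable_continuous_onI continuous_intros)
  have fst_snd: "fst \<in> (borel :: (('n, 'u) point \<times> ('n, 'u) point) measure) \<rightarrow>\<^sub>M borel"
    "snd \<in> (borel :: (('n, 'u) point \<times> ('n, 'u) point) measure) \<rightarrow>\<^sub>M borel"
    by (auto intro!: borel_measurable_continuous_onI continuous_intros)
  note Xi_pair = measurable_glue_plan[OF measurable_Xi_pair]
  have "distr (distr (glue_plan \<pi> K) borel (Xi_pair \<tau> \<theta>)) borel fst = distr \<eta> borel (Xi \<tau>)"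
    unfolding distr_glue_plan_forget_fst_eq[symmetric] distr_distr[OF fst_snd(1) Xi_pair]
      distr_distr[OF measurable_Xi forget(1)]
    by (simp add: comp_def Xi_pair_def)
  moreover have "distr (distr (glue_plan \<pi> K) borel (Xi_pair \<tau> \<theta>)) borel snd
      = distr (compose_plan \<pi> K) borel (Xi \<theta>)"
    unfolding distr_glue_plan_forget_snd[OF \<pi>_facts(1,2) K, symmetric] distr_distr[OF fst_snd(2) Xi_pair]
      distr_distr[OF measurable_Xi forget(2)]
    by (simp add: comp_def Xi_pair_def)
  ultimately show ?thesis
    unfolding couplings_def using prob_space.prob_space_distr[OF glue(2) Xi_pair] by simp
qed

private lemma AE_glue_plan_velocity_le:
  assumes "AE p in \<eta>. norm (snd p) \<le> c"
  shows "AE q in glue_plan \<pi> K. norm (snd q) \<le> c"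
proof -
  have "AE p in distr (glue_plan \<pi> K) borel (\<lambda>q. (snd (fst q), snd q)). norm (snd p) \<le> c"
    unfolding distr_glue_plan_forget_fst_eq by (rule assms)
  moreover have "{p \<in> space borel. norm (snd p) \<le> c} \<in> sets (borel :: (('n, 'u) point \<times> (real^'n)) measure)"
    by (auto intro!: borel_closed closed_Collect_le continuous_intros)
  ultimately show ?thesis
    by (subst (asm) AE_distr_iff)
       (auto intro!: measurable_glue_plan borel_measurable_continuous_onI continuous_intros)
qed

private lemma nn_integral_glue_plan_pdist_square:
  "(\<integral>\<^sup>+q. ennreal ((pdist (fst (fst q)) (snd (fst q)))^2) \<partial>glue_plan \<pi> K) = W2cost \<pi>"
proof -
  have "fst \<in> glue_plan \<pi> K \<rightarrow>\<^sub>M borel"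
    by (auto intro!: measurable_glue_plan borel_measurable_continuous_onI continuous_intros)
  then have "(\<integral>\<^sup>+q. ennreal ((pdist (fst (fst q)) (snd (fst q)))^2) \<partial>glue_plan \<pi> K)
      = W2cost (distr (glue_plan \<pi> K) borel fst)"
    unfolding W2cost_def by (subst nn_integral_distr) (simp_all add: borel_measurable_pdist_square)
  then show ?thesis using distr_glue_plan_fst[OF \<pi>_facts(1,2) K] by simp
qed

lemma W2cost_Xi_pair_glue_plan_le:
  assumes "AE p in \<eta>. norm (snd p) \<le> c" "0 \<le> c" "W2cost \<pi> = ennreal (W^2)" "0 \<le> W"
  shows "W2cost (distr (glue_plan \<pi> K) borel (Xi_pair \<tau> \<theta>)) \<le> ennreal ((W + \<bar>\<tau> - \<theta>\<bar> * c)^2)"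
proof -
  define d where "d q = pdist (fst (fst q)) (snd (fst q))"
    for q :: "(('n, 'u) point \<times> ('n, 'u) point) \<times> (real^'n)"
  have "AE q in glue_plan \<pi> K.
      ennreal ((pdist (fst (Xi_pair \<tau> \<theta> q)) (snd (Xi_pair \<tau> \<theta> q)))^2) \<le> ennreal ((d q + \<bar>\<tau> - \<theta>\<bar> * c)^2)"
    using AE_glue_plan_velocity_le[OF assms(1)]
  proof eventually_elim
    case (elim q)
    have "pdist (fst (Xi_pair \<tau> \<theta> q)) (snd (Xi_pair \<tau> \<theta> q)) \<le> d q + \<bar>\<tau> - \<theta>\<bar> * norm (snd q)"
      using pdist_Xi_le unfolding Xi_pair_def d_def by (metis fst_conv snd_conv pdist_commute)
    also have "\<dots> \<le> d q + \<bar>\<tau> - \<theta>\<bar> * c" using elim by (simp add: mult_left_mono)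
    finally show ?case by (intro ennreal_leI power_mono pdist_nonneg)
  qed
  then have "W2cost (distr (glue_plan \<pi> K) borel (Xi_pair \<tau> \<theta>))
      \<le> (\<integral>\<^sup>+q. ennreal ((d q + \<bar>\<tau> - \<theta>\<bar> * c)^2) \<partial>glue_plan \<pi> K)"
    unfolding W2cost_def
    by (subst nn_integral_distr[OF measurable_glue_plan[OF measurable_Xi_pair]])
       (simp_all add: borel_measurable_pdist_square nn_integral_mono_AE)
  also have "\<dots> \<le> ennreal ((W + \<bar>\<tau> - \<theta>\<bar> * c)^2)"
  proof (rule nn_integral_square_add_const_le[OF glue(2)])
    show "d \<in> borel_measurable (glue_plan \<pi> K)"
      unfolding d_def
      by (intro measurable_glue_plan measurable_compose[OF _ borel_measurable_continuous_onI[OF continuous_on_pdist]])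
         (auto intro!: borel_measurable_continuous_onI continuous_intros)
  qed (use assms nn_integral_glue_plan_pdist_square in \<open>simp_all add: d_def\<close>)
  finally show ?thesis .
qed

end

theorem lemma1:
  fixes c \<tau> \<theta> :: real
    and U :: "'u::metric_space set"
    and \<alpha> \<alpha>' :: "((real^'n) \<times> 'u) measure"
    and \<eta> :: "(((real^'n) \<times> 'u) \<times> (real^'n)) measure"
    and \<pi> :: "(((real^'n) \<times> 'u) \<times> ((real^'n) \<times> 'u)) measure"
    and K :: "((real^'n) \<times> 'u) \<Rightarrow> (real^'n) measure"
  assumes "c > 0"
    and "compact U"
    and "P2 U \<alpha>" and "P2 U \<alpha>'"
    and "prob_space \<eta>" and "sets \<eta> = sets borel"
    and "AE p in \<eta>. fst p \<in> tor \<times> U \<and> snd p \<in> cball 0 c"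
    and "distr \<eta> borel fst = \<alpha>"
    and "\<tau> > 0" and "\<theta> > 0"
    and "\<pi> \<in> optimal_plans \<alpha>' \<alpha>"
    and "K \<in> measurable borel (subprob_algebra borel)"
    and "\<forall>z. prob_space (K z)"
    and "\<eta> = bind \<alpha> (\<lambda>z. distr (K z) borel (\<lambda>w. (z, w)))"
  shows "W2 (distr \<eta> borel (Xi \<tau>)) (distr (compose_plan \<pi> K) borel (Xi \<theta>))
           \<le> W2 \<alpha> \<alpha>' + \<bar>\<tau> - \<theta>\<bar> * c"
proof -
  have \<pi>: "\<pi> \<in> couplings \<alpha>' \<alpha>" using assms(11) by (simp add: optimal_plans_def)
  note K = assms(12) spec[OF assms(13)]
  have "W2cost \<pi> < \<top>" by (rule W2cost_finite[OF assms(2,4,3) \<pi>])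
  with assms(11) have "W2cost \<pi> = ennreal ((W2 \<alpha> \<alpha>')^2)"
    by (simp add: W2cost_optimal_plan W2_commute[of \<alpha>'])
  moreover have "AE p in \<eta>. norm (snd p) \<le> c"
    using assms(7) by (rule eventually_mono) auto
  moreover have W2_nonneg: "0 \<le> W2 \<alpha> \<alpha>'" by (simp add: W2_def)
  ultimately have "W2cost (distr (glue_plan \<pi> K) borel (Xi_pair \<tau> \<theta>))
      \<le> ennreal ((W2 \<alpha> \<alpha>' + \<bar>\<tau> - \<theta>\<bar> * c)^2)"
    using W2cost_Xi_pair_glue_plan_le[OF \<pi> K assms(14)] assms(1) by simp
  with coupling_Xi_pair_glue_plan[OF \<pi> K assms(14)] show ?thesis
    by (rule W2_le_of_coupling) (use W2_nonneg assms(1) in simp)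
qed

end
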